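(* Let $a\ge b\ge1$ be integers with either $b\ge2$, or $b=1$ and $a\ge5$, and $A=\begin{pmatrix}2&-a\\-b&2\end{pmatrix}$. Let $j,k\in\mathbb Z_+$ with $j\not\equiv k \pmod 2$. Then (1) $\langle\beta_1^j,(\beta_2^k)^\vee\rangle=\langle\beta_2^k,(\beta_1^j)^\vee\rangle$; (2) if $\ell,i\in\mathbb Z_+$ with $j+k=\ell+i$, then $\langle\beta_1^j,(\beta_2^k)^\vee\rangle=\langle\beta_1^\ell,(\beta_2^i)^\vee\rangle$.
   Context: Let $\mathfrak g(A)$ have simple roots $\alpha_1,\alpha_2$, invariant form $(\alpha_1,\alpha_1)=2$, $(\alpha_2,\alpha_2)=2a/b$, $(\alpha_1,\alpha_2)=-a$, and for a real root $\beta$ let $\langle\lambda,\beta^\vee\rangle=2(\lambda,\beta)/(\beta,\beta)$. $\mathbb Z_+=\{0,1,2,\dots\}$. Define $c_0=d_0=0$, $c_1=d_1=1$, $c_{k+2}+c_k=a d_{k+1}$, $d_{k+2}+d_k=b c_{k+1}$, and $\beta_1^j=c_j\alpha_1+d_{j+1}\alpha_2$, $\beta_2^j=c_{j+1}\alpha_1+d_j\alpha_2$. *)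

theory Defs
  imports Main HOL.Real
begin

fun cd :: "int \<Rightarrow> int \<Rightarrow> nat \<Rightarrow> int \<times> int" where
  "cd a b 0 = (0, 0)"
| "cd a b (Suc 0) = (1, 1)"
| "cd a b (Suc (Suc k)) =
     (a * snd (cd a b (Suc k)) - fst (cd a b k),
      b * fst (cd a b (Suc k)) - snd (cd a b k))"

definition cseq :: "int \<Rightarrow> int \<Rightarrow> nat \<Rightarrow> int" where
  "cseq a b k = fst (cd a b k)"

definition dseq :: "int \<Rightarrow> int \<Rightarrow> nat \<Rightarrow> int" where
  "dseq a b k = snd (cd a b k)"

text \<open>Elements of the root lattice x alpha_1 + y alpha_2 are represented by coefficient pairs (x, y).\<close>
definition beta1 :: "int \<Rightarrow> int \<Rightarrow> nat \<Rightarrow> int \<times> int" where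
  "beta1 a b j = (cseq a b j, dseq a b (Suc j))"

definition beta2 :: "int \<Rightarrow> int \<Rightarrow> nat \<Rightarrow> int \<times> int" where
  "beta2 a b j = (cseq a b (Suc j), dseq a b j)"

text \<open>Invariant form: (a1,a1)=2, (a2,a2)=2a/b, (a1,a2)=-a.\<close>
definition invform :: "int \<Rightarrow> int \<Rightarrow> int \<times> int \<Rightarrow> int \<times> int \<Rightarrow> real" where
  "invform a b u v =
     2 * of_int (fst u) * of_int (fst v)
     - of_int a * (of_int (fst u) * of_int (snd v) + of_int (snd u) * of_int (fst v))
     + (2 * of_int a / of_int b) * of_int (snd u) * of_int (snd v)"

text \<open>pairing lambda beta = <lambda, beta^vee> = 2 (lambda, beta) / (beta, beta).\<close>
definition pairing :: "int \<Rightarrow> int \<Rightarrow> int \<times> int \<Rightarrow> int \<times> int \<Rightarrow> real" where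
  "pairing a b lam bet = 2 * invform a b lam bet / invform a b bet bet"

end

theory Submission
  imports Defs
begin

text \<open>
  The form is unchanged when both indices move by 2,
  so \<open>\<beta>\<^sub>1\<^sup>j\<close> has the length of \<open>\<alpha>\<^sub>2\<close> for even \<open>j\<close> and of \<open>\<alpha>\<^sub>1\<close> for odd \<open>j\<close> (dually for \<open>\<beta>\<^sub>2\<^sup>k\<close>);
  for odd \<open>j + k\<close> both roots thus have the same length, which gives the symmetry. Likewise
  \<open>(\<beta>\<^sub>1\<^sup>j\<^sup>+\<^sup>2, \<beta>\<^sub>2\<^sup>k) = (\<beta>\<^sub>1\<^sup>j, \<beta>\<^sub>2\<^sup>k\<^sup>+\<^sup>2)\<close>, and a single step along the antidiagonal \<open>j + k = const\<close>
  reduces to \<open>j = 0\<close>, where it follows from \<open>c(2m+1) = d(2m+1)\<close> and \<open>b c(2m) = a d(2m)\<close>: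
  the change of the form is exactly compensated by the change of length of \<open>\<beta>\<^sub>2\<close>.
\<close>

lemma cseq_0 [simp]: "cseq a b 0 = 0"
  and cseq_1 [simp]: "cseq a b (Suc 0) = 1"
  and dseq_0 [simp]: "dseq a b 0 = 0"
  and dseq_1 [simp]: "dseq a b (Suc 0) = 1"
  by (simp_all add: cseq_def dseq_def)

lemma cseq_Suc_Suc [simp]: "cseq a b (Suc (Suc n)) = a * dseq a b (Suc n) - cseq a b n"
  and dseq_Suc_Suc [simp]: "dseq a b (Suc (Suc n)) = b * cseq a b (Suc n) - dseq a b n"
  by (simp_all add: cseq_def dseq_def)

lemma cseq_dseq_parity:
  "cseq a b (2 * m + 1) = dseq a b (2 * m + 1) \<and> b * cseq a b (2 * m) = a * dseq a b (2 * m)"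
proof (induction m)
  case 0
  show ?case by simp
next
  case (Suc m)
  then have even: "b * cseq a b (2 * m + 2) = a * dseq a b (2 * m + 2)"
    by (simp add: algebra_simps)
  with Suc have "cseq a b (2 * m + 3) = dseq a b (2 * m + 3)"
    by (simp add: numeral_3_eq_3 algebra_simps)
  with even show ?case
    by (simp add: numeral_3_eq_3)
qed

definition scaled_invform :: "int \<Rightarrow> int \<Rightarrow> int \<times> int \<Rightarrow> int \<times> int \<Rightarrow> int" where
  "scaled_invform a b u v =
     2 * b * fst u * fst v - a * b * (fst u * snd v + snd u * fst v) + 2 * a * snd u * snd v"

lemma scaled_invform_commute: "scaled_invform a b u v = scaled_invform a b v u"
  unfolding scaled_invform_def by (simp add: algebra_simps)

lemma invform_eq_scaled_invform:
  "b \<noteq> 0 \<Longrightarrow> invform a b u v = scaled_invform a b u v / b"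
  unfolding invform_def scaled_invform_def by (simp add: field_simps)

lemma pairing_eq_scaled_invform:
  "b \<noteq> 0 \<Longrightarrow> pairing a b u v = 2 * scaled_invform a b u v / scaled_invform a b v v"
  unfolding pairing_def invform_eq_scaled_invform by simp

lemma scaled_invform_beta1_self:
  "scaled_invform a b (beta1 a b j) (beta1 a b j) = (if even j then 2 * a else 2 * b)"
proof (induction j rule: nat_induct2)
  case (step j)
  have "scaled_invform a b (beta1 a b (j + 2)) (beta1 a b (j + 2))
      = scaled_invform a b (beta1 a b j) (beta1 a b j)"
    by (simp add: beta1_def scaled_invform_def algebra_simps power2_eq_square)
  with step show ?case by simp
qed (simp_all add: beta1_def scaled_invform_def algebra_simps)

lemma scaled_invform_beta2_self:
  "scaled_invform a b (beta2 a b k) (beta2 a b k) = (if even k then 2 * b else 2 * a)"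
proof (induction k rule: nat_induct2)
  case (step k)
  have "scaled_invform a b (beta2 a b (k + 2)) (beta2 a b (k + 2))
      = scaled_invform a b (beta2 a b k) (beta2 a b k)"
    by (simp add: beta2_def scaled_invform_def algebra_simps)
  with step show ?case by simp
qed (simp_all add: beta2_def scaled_invform_def algebra_simps)

lemma scaled_invform_beta_shift:
  "scaled_invform a b (beta1 a b (j + 2)) (beta2 a b k)
     = scaled_invform a b (beta1 a b j) (beta2 a b (k + 2))"
  by (simp add: beta1_def beta2_def scaled_invform_def algebra_simps)

lemma scaled_invform_beta_base:
  assumes "even n"
  shows "a * scaled_invform a b (beta1 a b 1) (beta2 a b n)
       = b * scaled_invform a b (beta1 a b 0) (beta2 a b (n + 1))"
proof -
  obtain m where "n = 2 * m" using assms by blast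
  then have "cseq a b (Suc n) = dseq a b (Suc n)" "b * cseq a b n = a * dseq a b n"
    using cseq_dseq_parity[of a b m] by simp_all
  then show ?thesis
    unfolding beta1_def beta2_def scaled_invform_def by (simp add: algebra_simps)
qed

lemma scaled_invform_beta_antidiagonal:
  assumes "even (j + k)"
  shows "(if even j then a else b) * scaled_invform a b (beta1 a b (j + 1)) (beta2 a b k)
       = (if even j then b else a) * scaled_invform a b (beta1 a b j) (beta2 a b (k + 1))"
  using assms
proof (induction j arbitrary: k rule: nat_induct2)
  case 0
  then show ?case using scaled_invform_beta_base[of k a b] by simp
next
  case 1
  then have "even (k + 1)" by simp
  then show ?case
    using scaled_invform_beta_base[of "k + 1" a b] scaled_invform_beta_shift[of a b 0 k] by simp
next
  case (step j)
  then have "even (j + (k + 2))" by simp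
  then show ?case
    using step.IH[of "k + 2"] scaled_invform_beta_shift[of a b "j + 1" k]
      scaled_invform_beta_shift[of a b j "k + 1"]
    by (simp add: ac_simps)
qed

lemma pairing_beta_commute:
  assumes "b \<noteq> 0" and "odd (j + k)"
  shows "pairing a b (beta1 a b j) (beta2 a b k) = pairing a b (beta2 a b k) (beta1 a b j)"
proof -
  have "scaled_invform a b (beta1 a b j) (beta1 a b j) = scaled_invform a b (beta2 a b k) (beta2 a b k)"
    using assms(2) by (simp add: scaled_invform_beta1_self scaled_invform_beta2_self)
  then show ?thesis
    using assms(1) by (simp add: pairing_eq_scaled_invform scaled_invform_commute)
qed

lemma pairing_beta_antidiagonal:
  assumes "a \<noteq> 0" and "b \<noteq> 0" and "even (j + k)"
  shows "pairing a b (beta1 a b (j + 1)) (beta2 a b k) = pairing a b (beta1 a b j) (beta2 a b (k + 1))"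
proof -
  define p where "p = (if even j then a else b)"
  define q where "q = (if even j then b else a)"
  have "p \<noteq> 0" "q \<noteq> 0"
    using assms(1,2) by (simp_all add: p_def q_def)
  moreover have "scaled_invform a b (beta2 a b k) (beta2 a b k) = 2 * q"
    "scaled_invform a b (beta2 a b (k + 1)) (beta2 a b (k + 1)) = 2 * p"
    using assms(3) by (auto simp: scaled_invform_beta2_self p_def q_def)
  moreover have "real_of_int (p * scaled_invform a b (beta1 a b (j + 1)) (beta2 a b k))
      = of_int (q * scaled_invform a b (beta1 a b j) (beta2 a b (k + 1)))"
    using scaled_invform_beta_antidiagonal[OF assms(3)] by (simp add: p_def q_def)
  ultimately show ?thesis
    using assms(2) by (simp add: pairing_eq_scaled_invform field_simps)
qed

lemma pairing_beta_eq_sum: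
  assumes "a \<noteq> 0" and "b \<noteq> 0" and "odd (j + k)"
  shows "pairing a b (beta1 a b j) (beta2 a b k) = pairing a b (beta1 a b 0) (beta2 a b (j + k))"
  using assms(3)
proof (induction j arbitrary: k)
  case (Suc j)
  then have "pairing a b (beta1 a b (j + 1)) (beta2 a b k) = pairing a b (beta1 a b j) (beta2 a b (k + 1))"
    using pairing_beta_antidiagonal[OF assms(1,2)] by simp
  with Suc.IH[of "k + 1"] Suc.prems show ?case by simp
qed simp

theorem lemma3p9:
  fixes a b :: int and j k :: nat
  assumes "a \<ge> b" and "b \<ge> 1"
    and "b \<ge> 2 \<or> (b = 1 \<and> a \<ge> 5)"
    and "odd (j + k)"
  shows "pairing a b (beta1 a b j) (beta2 a b k) = pairing a b (beta2 a b k) (beta1 a b j)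
         \<and> (\<forall>l i :: nat. j + k = l + i \<longrightarrow>
           pairing a b (beta1 a b j) (beta2 a b k) = pairing a b (beta1 a b l) (beta2 a b i))"
proof (intro conjI allI impI)
  have "a \<noteq> 0" "b \<noteq> 0" using assms(1,2) by simp_all
  show "pairing a b (beta1 a b j) (beta2 a b k) = pairing a b (beta2 a b k) (beta1 a b j)"
    using \<open>b \<noteq> 0\<close> assms(4) by (rule pairing_beta_commute)
  fix l i :: nat
  assume "j + k = l + i"
  with assms(4) show "pairing a b (beta1 a b j) (beta2 a b k) = pairing a b (beta1 a b l) (beta2 a b i)"
    using pairing_beta_eq_sum[OF \<open>a \<noteq> 0\<close> \<open>b \<noteq> 0\<close>] by metis
qed

end
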